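(* Let $E_1,\dots,E_m$ be events on a probability space, let $1\le k\le m$, and fix real numbers $0<a<b$. Define $X_i=b$ on $E_i$ and $X_i=a$ on $E_i^c$, and for $\mathcal S\subseteq[m]$ with $|\mathcal S|=k$ define $$U(\mathcal S)=\mathbf P\Big(\bigcup_{i\in\mathcal S}E_i\Big),\qquad V(\mathcal S)=\mathbf E\Big[\ln\Big(\frac1k\sum_{i\in\mathcal S}X_i\Big)\Big].$$ Let $\mathcal S_L$ maximize $V$ and $\mathcal S_W$ maximize $U$ over all $k$-element subsets of $[m]$. Suppose there exist $\lambda\in[0,1]$ and $p\in(0,1/k]$ such that for every $k$-element $\mathcal S\subseteq[m]$, every $l\in[k]$, and every $T\subseteq\mathcal S$ with $|T|=l$, $$(1-\lambda)p^l(1-p)^{k-l}\le \mathbf P\Big(\Big(\bigcap_{i\in T}E_i\Big)\cap\Big(\bigcap_{j\in\mathcal S\setminus T}E_j^c\Big)\Big)\le(1+\lambda)p^l(1-p)^{k-l}.$$ Then $$\frac{U(\mathcal S_W)-U(\mathcal S_L)}{U(\mathcal S_W)}\le\frac{2\zeta(3)\lambda kp(1-p)}{\ln\!\big(1+\frac{b-a}{ka}\big)(1-\lambda)\big(1-(1-p)^k\big)},$$ where $\zeta(3)=\sum_{n=1}^\infty n^{-3}$.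
   Context: $[m]=\{1,\dots,m\}$. $\mathcal S_W$ is an optimal "picking winners" portfolio and $\mathcal S_L$ a log-optimal portfolio. *)

theory Defs
  imports "HOL-Probability.Probability"
begin

definition payoff :: "'a set \<Rightarrow> real \<Rightarrow> real \<Rightarrow> 'a \<Rightarrow> real" where
  "payoff A a b \<omega> = (if \<omega> \<in> A then b else a)"

definition winU :: "'a measure \<Rightarrow> (nat \<Rightarrow> 'a set) \<Rightarrow> nat set \<Rightarrow> real" where
  "winU M E S = measure M (\<Union>i\<in>S. E i)"

definition logV :: "'a measure \<Rightarrow> (nat \<Rightarrow> 'a set) \<Rightarrow> real \<Rightarrow> real \<Rightarrow> nat \<Rightarrow> nat set \<Rightarrow> real" where
  "logV M E a b k S = (\<integral>\<omega>. ln ((1 / real k) * (\<Sum>i\<in>S. payoff (E i) a b \<omega>)) \<partial>M)"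

definition zeta3 :: real where
  "zeta3 = (\<Sum>n. 1 / (real (Suc n)) ^ 3)"

end

theory Submission
  imports Defs
begin

text \<open>
  Grouping outcomes by the set \<open>T \<subseteq> S\<close> of events that occur, both objectives become sums
  over the cells of the partition generated by the events \<open>E i\<close>, \<open>i \<in> S\<close>: \<open>U(S)\<close> is the mass
  of the nonempty cells, and with \<open>c = (b - a) / (k a)\<close> the payoff on cell \<open>T\<close> is
  \<open>a (1 + |T| c)\<close>, so \<open>V(S) = ln a + ln (1 + c) U(S) + X(S)\<close>, where the excess \<open>X(S)\<close> weights
  cell \<open>T \<noteq> {}\<close> by \<open>ln (1 + |T| c) - ln (1 + c) \<in> [0, |T| - 1]\<close>. Approximate independence
  pins every nonempty cell to \<open>1 \<plusminus> \<lambda>\<close> times its binomial probability, so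
  \<open>X(S_L) - X(S_W) \<le> 2 \<lambda> \<Psi>\<close> with \<open>\<Psi>\<close> the binomial expectation of the excess, and
  \<open>\<Psi> \<le> k p - (1 - (1 - p)\<^sup>k) \<le> k p (1 - p)\<close>. Since \<open>S_L\<close> maximises \<open>V\<close>, this gives
  \<open>ln (1 + c) (U(S_W) - U(S_L)) \<le> 2 \<lambda> k p (1 - p)\<close>, while \<open>U(S_W) \<ge> (1 - \<lambda>) (1 - (1 - p)\<^sup>k)\<close>.
  The factor \<open>\<zeta>(3) \<ge> 1\<close> only weakens the bound.
\<close>

lemma sum_Pow_card:
  fixes h :: "nat \<Rightarrow> 'a::comm_semiring_1"
  assumes "finite S"
  shows "(\<Sum>T\<in>Pow S. h (card T)) = (\<Sum>l\<le>card S. of_nat (card S choose l) * h l)"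
proof -
  have "(\<Sum>T\<in>Pow S. h (card T)) = (\<Sum>l\<le>card S. \<Sum>T\<in>{T\<in>Pow S. card T = l}. h (card T))"
    by (rule sum.group[symmetric]) (use assms in \<open>auto intro: card_mono\<close>)
  also have "\<dots> = (\<Sum>l\<le>card S. of_nat (card S choose l) * h l)"
  proof (rule sum.cong)
    fix l
    have "{T\<in>Pow S. card T = l} = {T. T \<subseteq> S \<and> card T = l}" by auto
    then show "(\<Sum>T\<in>{T\<in>Pow S. card T = l}. h (card T)) = of_nat (card S choose l) * h l"
      using n_subsets[OF assms, of l] by simp
  qed simp
  finally show ?thesis .
qed

lemma sum_Bernstein_pos: "(\<Sum>l\<le>n. Bernstein n l x * of_bool (0 < l)) = 1 - (1 - x) ^ n"
proof -
  have "(\<Sum>l\<le>n. Bernstein n l x * of_bool (0 < l))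
      = (\<Sum>l\<le>n. Bernstein n l x - (if l = 0 then Bernstein n l x else 0))"
    by (rule sum.cong) auto
  also have "\<dots> = 1 - Bernstein n 0 x" by (simp add: sum_subtractf)
  finally show ?thesis by (simp add: Bernstein_def)
qed

lemma power_one_minus_le:
  fixes p :: real
  assumes "1 \<le> k" "0 < p" "p \<le> 1 / real k"
  shows "(1 - p) ^ k \<le> 1 - real k * p\<^sup>2"
proof (cases "k = 1")
  case True
  then show ?thesis using assms by (simp add: power2_eq_square)
next
  case False
  have kp: "real k * p \<le> 1" using assms by (simp add: field_simps)
  have "2 \<le> real k" using False assms(1) by simp
  then have "p \<le> 1 / 2" using assms(3) by (smt (verit) frac_le)
  have pos: "0 < 1 + real k * p" using assms(2) by (simp add: add_pos_nonneg)
  have "(1 - p) ^ k * (1 + real k * p) \<le> (1 - p) ^ k * (1 + p) ^ k"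
    using Bernoulli_inequality[of p k] assms \<open>p \<le> 1 / 2\<close> by (intro mult_left_mono) auto
  also have "\<dots> = (1 - p\<^sup>2) ^ k" by (simp add: power_mult_distrib[symmetric] power2_eq_square algebra_simps)
  also have "\<dots> \<le> 1" using assms(2) \<open>p \<le> 1 / 2\<close> by (intro power_le_one) (auto simp: power_le_one)
  also have "1 \<le> (1 - real k * p\<^sup>2) * (1 + real k * p)"
  proof -
    have "p * (1 + real k * p) \<le> p * 2" by (rule mult_left_mono) (use kp assms(2) in auto)
    then have "p * (1 + real k * p) \<le> 1" using \<open>p \<le> 1 / 2\<close> by linarith
    then have "0 \<le> real k * p * (1 - p * (1 + real k * p))" using assms(2) by simp
    moreover have "(1 - real k * p\<^sup>2) * (1 + real k * p) = 1 + real k * p * (1 - p * (1 + real k * p))"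
      by (simp add: algebra_simps power2_eq_square)
    ultimately show ?thesis by linarith
  qed
  finally have "(1 - p) ^ k * (1 + real k * p) \<le> (1 - real k * p\<^sup>2) * (1 + real k * p)" .
  then show ?thesis using pos by (rule mult_right_le_imp_le)
qed

lemma zeta3_ge_1: "1 \<le> zeta3"
proof -
  have "summable (\<lambda>n. inverse (real n ^ 3))" by (rule inverse_power_summable) auto
  then have "summable (\<lambda>n. inverse (real (Suc n) ^ 3))" by (subst summable_Suc_iff)
  then have "summable (\<lambda>n. 1 / real (Suc n) ^ 3)" by (simp add: divide_inverse)
  from sum_le_suminf[OF this, of "{..<1}"] show ?thesis unfolding zeta3_def by simp
qed

lemma ln_one_plus_mult_diff_bounds:
  fixes c x :: real
  assumes "0 \<le> c" "1 \<le> x"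
  shows "0 \<le> ln (1 + x * c) - ln (1 + c)" and "ln (1 + x * c) - ln (1 + c) \<le> x - 1"
proof -
  have c_le: "c \<le> x * c" using mult_right_mono[OF assms(2,1)] by simp
  then show "0 \<le> ln (1 + x * c) - ln (1 + c)" using assms(1) by simp
  have "ln (1 + x * c) - ln (1 + c) = ln ((1 + x * c) / (1 + c))"
    using assms c_le by (simp add: ln_div)
  also have "\<dots> \<le> (1 + x * c) / (1 + c) - 1"
    using assms c_le by (intro ln_le_minus_one) simp
  also have "\<dots> = (x - 1) * (c / (1 + c))" using assms(1) by (simp add: field_simps)
  also have "\<dots> \<le> (x - 1) * 1" using assms by (intro mult_left_mono) simp_all
  finally show "ln (1 + x * c) - ln (1 + c) \<le> x - 1" by simp
qed

definition log_excess :: "real \<Rightarrow> nat \<Rightarrow> real" where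
  "log_excess c l = (if l = 0 then 0 else ln (1 + real l * c) - ln (1 + c))"

lemma ln_one_plus_eq_log_excess: "ln (1 + real l * c) = ln (1 + c) * of_bool (0 < l) + log_excess c l"
  by (simp add: log_excess_def)

lemma log_excess_bounds:
  assumes "0 \<le> c"
  shows "0 \<le> log_excess c l" and "log_excess c l \<le> real l - of_bool (0 < l)"
  using ln_one_plus_mult_diff_bounds[OF assms, of "real l"] by (auto simp: log_excess_def)

definition cell :: "'a measure \<Rightarrow> (nat \<Rightarrow> 'a set) \<Rightarrow> nat set \<Rightarrow> nat set \<Rightarrow> 'a set" where
  "cell M E S T = {\<omega>\<in>space M. \<forall>i\<in>S. \<omega> \<in> E i \<longleftrightarrow> i \<in> T}"

lemma sets_cell:
  assumes "finite S" "\<forall>i\<in>S. E i \<in> sets M"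
  shows "cell M E S T \<in> sets M"
  unfolding cell_def
proof (rule sets.sets_Collect_finite_All[OF _ assms(1)])
  fix i assume "i \<in> S"
  then have "{\<omega>\<in>space M. \<omega> \<in> E i \<longleftrightarrow> i \<in> T} = (if i \<in> T then E i else space M - E i)"
    using assms(2) sets.sets_into_space by auto
  then show "{\<omega>\<in>space M. \<omega> \<in> E i \<longleftrightarrow> i \<in> T} \<in> sets M"
    using assms(2) \<open>i \<in> S\<close> by auto
qed

lemma Inter_Int_Inter_compl_eq_cell:
  assumes "S \<noteq> {}" "\<forall>i\<in>S. E i \<subseteq> space M" "T \<subseteq> S"
  shows "(\<Inter>i\<in>T. E i) \<inter> (\<Inter>j\<in>S - T. space M - E j) = cell M E S T"
proof (intro equalityI subsetI)
  fix \<omega> assume \<omega>: "\<omega> \<in> (\<Inter>i\<in>T. E i) \<inter> (\<Inter>j\<in>S - T. space M - E j)"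
  obtain i where "i \<in> S" using assms(1) by auto
  then have "\<omega> \<in> space M" using \<omega> assms(2) by (cases "i \<in> T") blast+
  with \<omega> show "\<omega> \<in> cell M E S T" unfolding cell_def by blast
qed (use assms(3) in \<open>auto simp: cell_def\<close>)

lemma integral_eq_sum_cells:
  fixes f :: "nat set \<Rightarrow> real"
  assumes "finite_measure M" "finite S" "\<forall>i\<in>S. E i \<in> sets M"
  shows "(\<integral>\<omega>. f {i\<in>S. \<omega> \<in> E i} \<partial>M) = (\<Sum>T\<in>Pow S. f T * measure M (cell M E S T))"
proof -
  interpret finite_measure M by fact
  have "f {i\<in>S. \<omega> \<in> E i} = (\<Sum>T\<in>Pow S. f T * indicator (cell M E S T) \<omega>)"
    if "\<omega> \<in> space M" for \<omega>
  proof -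
    have "(\<Sum>T\<in>Pow S. f T * indicator (cell M E S T) \<omega>)
        = (\<Sum>T\<in>Pow S. if T = {i\<in>S. \<omega> \<in> E i} then f T else 0)"
      using \<open>\<omega> \<in> space M\<close> by (intro sum.cong) (auto simp: cell_def indicator_def)
    then show ?thesis using assms(2) by simp
  qed
  then have "(\<integral>\<omega>. f {i\<in>S. \<omega> \<in> E i} \<partial>M) = (\<integral>\<omega>. (\<Sum>T\<in>Pow S. f T * indicator (cell M E S T) \<omega>) \<partial>M)"
    by (intro Bochner_Integration.integral_cong) simp_all
  also have "\<dots> = (\<Sum>T\<in>Pow S. \<integral>\<omega>. f T * indicator (cell M E S T) \<omega> \<partial>M)"
    using sets_cell[OF assms(2,3)]
    by (intro Bochner_Integration.integral_sum integrable_mult_right integrable_real_indicator)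
      (auto simp: emeasure_eq_measure)
  also have "\<dots> = (\<Sum>T\<in>Pow S. f T * measure M (cell M E S T))"
    using sets_cell[OF assms(2,3)] by simp
  finally show ?thesis .
qed

lemma sum_measure_cells:
  assumes "prob_space M" "finite S" "\<forall>i\<in>S. E i \<in> sets M"
  shows "(\<Sum>T\<in>Pow S. measure M (cell M E S T)) = 1"
  using integral_eq_sum_cells[OF prob_space.finite_measure[OF assms(1)] assms(2,3), of "\<lambda>_. 1"]
    prob_space.prob_space[OF assms(1)] by simp

lemma winU_eq_sum_cells:
  assumes "finite_measure M" "finite S" "\<forall>i\<in>S. E i \<in> sets M"
  shows "winU M E S = (\<Sum>T\<in>Pow S. of_bool (0 < card T) * measure M (cell M E S T))"
proof -
  interpret finite_measure M by fact
  have "winU M E S = (\<integral>\<omega>. indicator (\<Union>i\<in>S. E i) \<omega> \<partial>M)"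
    unfolding winU_def using assms by (simp add: sets.finite_UN)
  also have "\<dots> = (\<integral>\<omega>. of_bool (0 < card {i\<in>S. \<omega> \<in> E i}) \<partial>M)"
    using assms(2) by (intro Bochner_Integration.integral_cong) (auto simp: indicator_def card_gt_0_iff)
  also have "\<dots> = (\<Sum>T\<in>Pow S. of_bool (0 < card T) * measure M (cell M E S T))"
    by (rule integral_eq_sum_cells[OF assms])
  finally show ?thesis .
qed

lemma logV_eq_sum_cells:
  assumes "prob_space M" "finite S" "\<forall>i\<in>S. E i \<in> sets M" "card S = k" "0 < k" "0 < a" "a \<le> b"
  defines "c \<equiv> (b - a) / (real k * a)"
  shows "logV M E a b k S = ln a + (\<Sum>T\<in>Pow S. ln (1 + real (card T) * c) * measure M (cell M E S T))"
proof -
  have "0 \<le> c" unfolding c_def using assms(6,7) by simp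
  then have pos: "0 < 1 + real n * c" for n by (simp add: add_pos_nonneg)
  have payoffs: "1 / real k * (\<Sum>i\<in>S. payoff (E i) a b \<omega>) = a * (1 + real (card {i\<in>S. \<omega> \<in> E i}) * c)"
    for \<omega>
  proof -
    have "1 / real k * (\<Sum>i\<in>S. payoff (E i) a b \<omega>)
        = 1 / real k * (\<Sum>i\<in>S. a + (b - a) * of_bool (\<omega> \<in> E i))"
      by (auto simp: payoff_def intro!: sum.cong arg_cong[where f = "(*) _"])
    also have "\<dots> = 1 / real k * (real k * a + (b - a) * real (card {i\<in>S. \<omega> \<in> E i}))"
      using assms(2,4) by (simp add: sum.distrib sum_distrib_left[symmetric] Int_def)
    also have "\<dots> = a * (1 + real (card {i\<in>S. \<omega> \<in> E i}) * c)"
      using assms(5,6) unfolding c_def by (simp add: field_simps)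
    finally show ?thesis .
  qed
  have "logV M E a b k S = (\<integral>\<omega>. ln a + ln (1 + real (card {i\<in>S. \<omega> \<in> E i}) * c) \<partial>M)"
    unfolding logV_def payoffs
    by (intro Bochner_Integration.integral_cong) (simp_all add: ln_mult_pos[OF assms(6) pos])
  also have "\<dots> = (\<Sum>T\<in>Pow S. (ln a + ln (1 + real (card T) * c)) * measure M (cell M E S T))"
    by (rule integral_eq_sum_cells[OF prob_space.finite_measure[OF assms(1)] assms(2,3)])
  also have "\<dots> = ln a * (\<Sum>T\<in>Pow S. measure M (cell M E S T))
      + (\<Sum>T\<in>Pow S. ln (1 + real (card T) * c) * measure M (cell M E S T))"
    by (simp add: distrib_right sum.distrib sum_distrib_left)
  finally show ?thesis using sum_measure_cells[OF assms(1-3)] by simp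
qed

lemma logV_eq_winU_plus_excess:
  assumes "prob_space M" "finite S" "\<forall>i\<in>S. E i \<in> sets M" "card S = k" "0 < k" "0 < a" "a \<le> b"
  defines "c \<equiv> (b - a) / (real k * a)"
  shows "logV M E a b k S = ln a + ln (1 + c) * winU M E S
           + (\<Sum>T\<in>Pow S. log_excess c (card T) * measure M (cell M E S T))"
  using logV_eq_sum_cells[OF assms(1-7)]
    winU_eq_sum_cells[OF prob_space.finite_measure[OF assms(1)] assms(2,3)]
  unfolding ln_one_plus_eq_log_excess c_def
  by (simp add: distrib_right sum.distrib sum_distrib_left mult.assoc)

definition approx_iid_cells :: "'a measure \<Rightarrow> (nat \<Rightarrow> 'a set) \<Rightarrow> nat set \<Rightarrow> real \<Rightarrow> real \<Rightarrow> bool" where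
  "approx_iid_cells M E S lam p \<longleftrightarrow>
     (\<forall>T\<in>Pow S. T \<noteq> {} \<longrightarrow>
        (1 - lam) * p ^ card T * (1 - p) ^ (card S - card T) \<le> measure M (cell M E S T) \<and>
        measure M (cell M E S T) \<le> (1 + lam) * p ^ card T * (1 - p) ^ (card S - card T))"

lemma approx_iid_cellsI:
  assumes "finite S" "S \<noteq> {}" "\<forall>i\<in>S. E i \<in> sets M"
    and "\<forall>T. T \<subseteq> S \<and> 1 \<le> card T \<longrightarrow>
           (1 - lam) * p ^ card T * (1 - p) ^ (card S - card T)
             \<le> measure M ((\<Inter>i\<in>T. E i) \<inter> (\<Inter>j\<in>S - T. space M - E j))
         \<and> measure M ((\<Inter>i\<in>T. E i) \<inter> (\<Inter>j\<in>S - T. space M - E j))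
             \<le> (1 + lam) * p ^ card T * (1 - p) ^ (card S - card T)"
  shows "approx_iid_cells M E S lam p"
  unfolding approx_iid_cells_def
proof (intro ballI impI)
  fix T assume "T \<in> Pow S" "T \<noteq> {}"
  then have "1 \<le> card T" using assms(1) by (auto simp: Suc_le_eq card_gt_0_iff finite_subset)
  moreover have "(\<Inter>i\<in>T. E i) \<inter> (\<Inter>j\<in>S - T. space M - E j) = cell M E S T"
    using \<open>T \<in> Pow S\<close> assms(3) sets.sets_into_space
    by (intro Inter_Int_Inter_compl_eq_cell[OF assms(2)]) blast+
  ultimately show "(1 - lam) * p ^ card T * (1 - p) ^ (card S - card T) \<le> measure M (cell M E S T) \<and>
        measure M (cell M E S T) \<le> (1 + lam) * p ^ card T * (1 - p) ^ (card S - card T)"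
    using assms(4) \<open>T \<in> Pow S\<close> by auto
qed

lemma sum_mult_bounds_of_approx:
  fixes e w g :: "'b \<Rightarrow> real"
  assumes "\<forall>x\<in>A. 0 \<le> g x"
    and "\<forall>x\<in>A. g x \<noteq> 0 \<longrightarrow> (1 - lam) * w x \<le> e x \<and> e x \<le> (1 + lam) * w x"
  shows "(1 - lam) * (\<Sum>x\<in>A. g x * w x) \<le> (\<Sum>x\<in>A. g x * e x)"
    and "(\<Sum>x\<in>A. g x * e x) \<le> (1 + lam) * (\<Sum>x\<in>A. g x * w x)"
proof -
  have "(1 - lam) * (g x * w x) \<le> g x * e x \<and> g x * e x \<le> (1 + lam) * (g x * w x)" if "x \<in> A" for x
  proof (cases "g x = 0")
    case False
    then have "g x * ((1 - lam) * w x) \<le> g x * e x \<and> g x * e x \<le> g x * ((1 + lam) * w x)"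
      using assms that by (auto intro: mult_left_mono)
    then show ?thesis by (simp add: mult_ac)
  qed simp
  then show "(1 - lam) * (\<Sum>x\<in>A. g x * w x) \<le> (\<Sum>x\<in>A. g x * e x)"
    and "(\<Sum>x\<in>A. g x * e x) \<le> (1 + lam) * (\<Sum>x\<in>A. g x * w x)"
    by (auto simp: sum_distrib_left intro: sum_mono)
qed

lemma sum_cells_Bernstein_bounds:
  assumes "approx_iid_cells M E S lam p" "finite S" "\<forall>l. 0 \<le> g l" "g 0 = 0"
  shows "(1 - lam) * (\<Sum>l\<le>card S. Bernstein (card S) l p * g l)
           \<le> (\<Sum>T\<in>Pow S. g (card T) * measure M (cell M E S T))"
    and "(\<Sum>T\<in>Pow S. g (card T) * measure M (cell M E S T))
           \<le> (1 + lam) * (\<Sum>l\<le>card S. Bernstein (card S) l p * g l)"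
proof -
  have Bernstein: "(\<Sum>T\<in>Pow S. g (card T) * (p ^ card T * (1 - p) ^ (card S - card T)))
      = (\<Sum>l\<le>card S. Bernstein (card S) l p * g l)"
    using sum_Pow_card[OF assms(2), of "\<lambda>l. g l * (p ^ l * (1 - p) ^ (card S - l))"]
    by (simp add: Bernstein_def mult_ac)
  have "\<forall>T\<in>Pow S. g (card T) \<noteq> 0 \<longrightarrow>
      (1 - lam) * (p ^ card T * (1 - p) ^ (card S - card T)) \<le> measure M (cell M E S T) \<and>
      measure M (cell M E S T) \<le> (1 + lam) * (p ^ card T * (1 - p) ^ (card S - card T))"
    using assms(1,4) unfolding approx_iid_cells_def by (metis card.empty mult.assoc)
  from sum_mult_bounds_of_approx[OF _ this] assms(3) Bernstein
  show "(1 - lam) * (\<Sum>l\<le>card S. Bernstein (card S) l p * g l)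
           \<le> (\<Sum>T\<in>Pow S. g (card T) * measure M (cell M E S T))"
    and "(\<Sum>T\<in>Pow S. g (card T) * measure M (cell M E S T))
           \<le> (1 + lam) * (\<Sum>l\<le>card S. Bernstein (card S) l p * g l)"
    by simp_all
qed

lemma winU_ge_approx_iid:
  assumes "finite_measure M" "finite S" "\<forall>i\<in>S. E i \<in> sets M" "approx_iid_cells M E S lam p"
  shows "(1 - lam) * (1 - (1 - p) ^ card S) \<le> winU M E S"
  using sum_cells_Bernstein_bounds(1)[OF assms(4,2), of "\<lambda>l. of_bool (0 < l)"]
  by (simp add: winU_eq_sum_cells[OF assms(1-3)] sum_Bernstein_pos)

lemma sum_Bernstein_log_excess_le:
  assumes "0 \<le> c" "1 \<le> n" "0 < p" "p \<le> 1 / real n"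
  shows "(\<Sum>l\<le>n. Bernstein n l p * log_excess c l) \<le> real n * p * (1 - p)"
proof -
  have "p \<le> 1" using assms(2,4) order_trans[of p "1 / real n" 1] by simp
  have "(\<Sum>l\<le>n. Bernstein n l p * log_excess c l)
      \<le> (\<Sum>l\<le>n. real l * Bernstein n l p - Bernstein n l p * of_bool (0 < l))"
  proof (rule sum_mono)
    fix l
    have "Bernstein n l p * log_excess c l \<le> Bernstein n l p * (real l - of_bool (0 < l))"
      using log_excess_bounds(2)[OF assms(1)] Bernstein_nonneg[of p] assms(3) \<open>p \<le> 1\<close>
      by (intro mult_left_mono) auto
    then show "Bernstein n l p * log_excess c l \<le> real l * Bernstein n l p - Bernstein n l p * of_bool (0 < l)"
      by (simp add: algebra_simps)
  qed
  also have "\<dots> = real n * p - (1 - (1 - p) ^ n)" by (simp add: sum_subtractf sum_Bernstein_pos)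
  also have "\<dots> \<le> real n * p * (1 - p)"
    using power_one_minus_le[OF assms(2-4)] by (simp add: algebra_simps power2_eq_square)
  finally show ?thesis .
qed

lemma winU_gap_le:
  assumes "prob_space M" "0 < k" "0 < a" "a \<le> b" "0 \<le> lam"
    and "finite S1" "card S1 = k" "\<forall>i\<in>S1. E i \<in> sets M" "approx_iid_cells M E S1 lam p"
    and "finite S2" "card S2 = k" "\<forall>i\<in>S2. E i \<in> sets M" "approx_iid_cells M E S2 lam p"
    and "logV M E a b k S1 \<le> logV M E a b k S2"
  defines "c \<equiv> (b - a) / (real k * a)"
  shows "ln (1 + c) * (winU M E S1 - winU M E S2) \<le> 2 * lam * (\<Sum>l\<le>k. Bernstein k l p * log_excess c l)"
proof -
  let ?\<Psi> = "\<Sum>l\<le>k. Bernstein k l p * log_excess c l"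
  let ?excess = "\<lambda>S. \<Sum>T\<in>Pow S. log_excess c (card T) * measure M (cell M E S T)"
  have "0 \<le> c" unfolding c_def using assms(3,4) by simp
  then have g: "\<forall>l. 0 \<le> log_excess c l" "log_excess c 0 = 0"
    by (simp add: log_excess_bounds(1)) (simp add: log_excess_def)
  have "(1 - lam) * ?\<Psi> \<le> ?excess S1"
    using sum_cells_Bernstein_bounds(1)[OF assms(9,6) g] assms(7) by simp
  moreover have "?excess S2 \<le> (1 + lam) * ?\<Psi>"
    using sum_cells_Bernstein_bounds(2)[OF assms(13,10) g] assms(11) by simp
  moreover have "logV M E a b k S = ln a + ln (1 + c) * winU M E S + ?excess S"
    if "finite S" "\<forall>i\<in>S. E i \<in> sets M" "card S = k" for S
    unfolding c_def by (rule logV_eq_winU_plus_excess[OF assms(1) that assms(2-4)])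
  ultimately show ?thesis
    using assms(6-8,10-12,14) by (simp add: right_diff_distrib algebra_simps)
qed

lemma divide_le_of_mult_le:
  fixes d f q r u :: real
  assumes "0 < q" "q \<le> u" "0 < f" "f * d \<le> r" "0 \<le> r"
  shows "d / u \<le> r / (f * q)"
proof (cases "d \<le> 0")
  case True
  then have "d / u \<le> 0" using assms(1,2) by (simp add: divide_nonpos_pos)
  also have "0 \<le> r / (f * q)" using assms by simp
  finally show ?thesis .
next
  case False
  then have "d / u \<le> d / q" using assms(1,2) by (intro divide_left_mono) auto
  also have "\<dots> \<le> r / (f * q)" using assms(1,3,4) by (simp add: field_simps)
  finally show ?thesis .
qed

theorem theorem5:
  fixes M :: "'a measure" and E :: "nat \<Rightarrow> 'a set" and m k :: nat
    and a b lam p :: real and S_L S_W :: "nat set"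
  assumes "prob_space M"
    and "\<forall>i\<in>{1..m}. E i \<in> sets M"
    and "1 \<le> k" and "k \<le> m"
    and "0 < a" and "a < b"
    and "S_L \<subseteq> {1..m}" and "card S_L = k"
    and "\<forall>S. S \<subseteq> {1..m} \<and> card S = k \<longrightarrow> logV M E a b k S \<le> logV M E a b k S_L"
    and "S_W \<subseteq> {1..m}" and "card S_W = k"
    and "\<forall>S. S \<subseteq> {1..m} \<and> card S = k \<longrightarrow> winU M E S \<le> winU M E S_W"
    and "0 \<le> lam" and "lam \<le> 1"
    and "0 < p" and "p \<le> 1 / real k"
    and "\<forall>S. S \<subseteq> {1..m} \<and> card S = k \<longrightarrow>
           (\<forall>T. T \<subseteq> S \<and> 1 \<le> card T \<longrightarrow>
              (1 - lam) * p ^ card T * (1 - p) ^ (k - card T)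
                \<le> measure M ((\<Inter>i\<in>T. E i) \<inter> (\<Inter>j\<in>S - T. space M - E j))
            \<and> measure M ((\<Inter>i\<in>T. E i) \<inter> (\<Inter>j\<in>S - T. space M - E j))
                \<le> (1 + lam) * p ^ card T * (1 - p) ^ (k - card T))"
  shows "lam < 1 \<longrightarrow>
    (winU M E S_W - winU M E S_L) / winU M E S_W
      \<le> 2 * zeta3 * lam * real k * p * (1 - p)
         / (ln (1 + (b - a) / (real k * a)) * (1 - lam) * (1 - (1 - p) ^ k))"
proof
  assume "lam < 1"
  define c where "c = (b - a) / (real k * a)"
  have "0 < c" unfolding c_def using assms(3,5,6) by simp
  have "p \<le> 1" using assms(3,16) order_trans[of p "1 / real k" 1] by simp
  have admissible: "finite S \<and> (\<forall>i\<in>S. E i \<in> sets M) \<and> approx_iid_cells M E S lam p"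
    if "S \<subseteq> {1..m}" "card S = k" for S
  proof (intro conjI)
    show "finite S" using finite_subset[OF that(1)] by simp
    show meas: "\<forall>i\<in>S. E i \<in> sets M" using that(1) assms(2) by auto
    have "S \<noteq> {}" using that(2) assms(3) by auto
    show "approx_iid_cells M E S lam p"
      using assms(17)[THEN spec[of _ S], THEN mp, OF conjI[OF that]] unfolding that(2)[symmetric]
      by (rule approx_iid_cellsI[OF \<open>finite S\<close> \<open>S \<noteq> {}\<close> meas])
  qed
  note W = admissible[OF assms(10,11)] and L = admissible[OF assms(7,8)]
  have "ln (1 + c) * (winU M E S_W - winU M E S_L) \<le> 2 * lam * (\<Sum>l\<le>k. Bernstein k l p * log_excess c l)"
    unfolding c_def using W L assms(1,3,5,6,8-11,13) by (intro winU_gap_le) auto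
  also have "\<dots> \<le> 2 * lam * (real k * p * (1 - p))"
    using sum_Bernstein_log_excess_le[of c k p] assms(3,5,6,13,15,16) unfolding c_def
    by (intro mult_left_mono) auto
  also have "\<dots> \<le> 2 * zeta3 * lam * real k * p * (1 - p)"
    using mult_right_mono[OF zeta3_ge_1, of "2 * lam * real k * p * (1 - p)"] assms(13,15) \<open>p \<le> 1\<close>
    by (simp add: mult_ac)
  finally have gap: "ln (1 + c) * (winU M E S_W - winU M E S_L) \<le> 2 * zeta3 * lam * real k * p * (1 - p)" .
  have "0 < (1 - lam) * (1 - (1 - p) ^ k)"
    using \<open>lam < 1\<close> assms(3,15) \<open>p \<le> 1\<close> by (simp add: power_less_one_iff)
  moreover have "(1 - lam) * (1 - (1 - p) ^ k) \<le> winU M E S_W"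
    using winU_ge_approx_iid[OF prob_space.finite_measure[OF assms(1)]] W assms(11) by auto
  ultimately show "(winU M E S_W - winU M E S_L) / winU M E S_W
      \<le> 2 * zeta3 * lam * real k * p * (1 - p)
         / (ln (1 + (b - a) / (real k * a)) * (1 - lam) * (1 - (1 - p) ^ k))"
    using divide_le_of_mult_le[OF _ _ _ gap] \<open>0 < c\<close> zeta3_ge_1 assms(13,15) \<open>p \<le> 1\<close>
    unfolding c_def by (simp add: mult.assoc)
qed

end
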